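(* Let $m\ge4$. Let $A$ be the $m\times m$ coloring matrix whose rows $1$ and $2$ are zero, whose rows $3,4,\dots,m-1$ each have a single $1$ in column $2$ and zeros elsewhere, and whose row $m$ has ones in columns $1$ and $2$ and zeros elsewhere. Let $B$ be the $m\times m$ coloring matrix whose row $1$ is zero, whose rows $2$ and $3$ each have a single $1$ in column $m$ and zeros elsewhere, and whose rows $4,\dots,m$ each have a single $1$ in column $1$ and zeros elsewhere. Then for all $n\ge2$, $t_A(n)=t_B(n)=2^{n-1}+m-3$ (and $t_A(1)=t_B(1)=m$). However, $A$ and $B$ are not strongly tree coloring equivalent.
   Context: A plane tree is an unlabeled rooted tree in which the children of every vertex are linearly ordered. A coloring matrix is an $m\times m$ matrix $A=(a_{ij})$ with entries in $\{0,1\}$. An $A$-coloring of a plane tree assigns to each vertex a color in $\{1,\dots,m\}$ such that whenever a vertex of color $j$ is a child of a vertex of color $i$, $a_{ij}=1$. Let $t_A(n)$ be the number of pairs (plane tree with $n$ vertices, $A$-coloring of it) and $t_A^{(i)}(n)$ the number of those with root color $i$. Two $m\times m$ coloring matrices $A,B$ are strictly tree coloring equivalent if $t_A^{(i)}(n)=t_B^{(i)}(n)$ for all $n\ge1$ and all $i$; they are strongly tree coloring equivalent if there is an $m\times m$ permutation matrix $P$ such that $P^TAP$ and $B$ are strictly tree coloring equivalent. *)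

theory Defs
  imports "HOL-Combinatorics.Permutations"
begin

datatype ctree = CNode nat "ctree list"

fun root_col :: "ctree \<Rightarrow> nat" where
  "root_col (CNode c ts) = c"

fun nverts :: "ctree \<Rightarrow> nat" where
  "nverts (CNode c ts) = 1 + sum_list (map nverts ts)"

text \<open>Coloring matrices of size m: functions nat => nat => nat, indices 1..m,
  entries in {0,1}.  A-coloring: every color in {1..m}, and a child of color j
  of a vertex of color i requires a_ij = 1.\<close>
fun valid_col :: "nat \<Rightarrow> (nat \<Rightarrow> nat \<Rightarrow> nat) \<Rightarrow> ctree \<Rightarrow> bool" where
  "valid_col m A (CNode c ts) =
     (1 \<le> c \<and> c \<le> m \<and> (\<forall>t\<in>set ts. A c (root_col t) = 1 \<and> valid_col m A t))"

definition coloring_matrix :: "nat \<Rightarrow> (nat \<Rightarrow> nat \<Rightarrow> nat) \<Rightarrow> bool" where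
  "coloring_matrix m A \<longleftrightarrow> (\<forall>i\<in>{1..m}. \<forall>j\<in>{1..m}. A i j \<in> {0,1})"

definition t_col :: "nat \<Rightarrow> (nat \<Rightarrow> nat \<Rightarrow> nat) \<Rightarrow> nat \<Rightarrow> nat" where
  "t_col m A n = card {T. valid_col m A T \<and> nverts T = n}"

definition t_col_root :: "nat \<Rightarrow> (nat \<Rightarrow> nat \<Rightarrow> nat) \<Rightarrow> nat \<Rightarrow> nat \<Rightarrow> nat" where
  "t_col_root m A i n = card {T. valid_col m A T \<and> nverts T = n \<and> root_col T = i}"

definition strictly_tc_equiv :: "nat \<Rightarrow> (nat \<Rightarrow> nat \<Rightarrow> nat) \<Rightarrow> (nat \<Rightarrow> nat \<Rightarrow> nat) \<Rightarrow> bool" where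
  "strictly_tc_equiv m A B \<longleftrightarrow>
     (\<forall>n\<ge>1. \<forall>i\<in>{1..m}. t_col_root m A i n = t_col_root m B i n)"

text \<open>P^T A P for the permutation matrix P of a permutation s of {1..m} has
  (i,j) entry A (s i) (s j).\<close>
definition strongly_tc_equiv :: "nat \<Rightarrow> (nat \<Rightarrow> nat \<Rightarrow> nat) \<Rightarrow> (nat \<Rightarrow> nat \<Rightarrow> nat) \<Rightarrow> bool" where
  "strongly_tc_equiv m A B \<longleftrightarrow>
     (\<exists>s. s permutes {1..m} \<and> strictly_tc_equiv m (\<lambda>i j. A (s i) (s j)) B)"

definition matA :: "nat \<Rightarrow> nat \<Rightarrow> nat \<Rightarrow> nat" where
  "matA m i j = (if (3 \<le> i \<and> i \<le> m - 1 \<and> j = 2) \<or> (i = m \<and> (j = 1 \<or> j = 2)) then 1 else 0)"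

definition matB :: "nat \<Rightarrow> nat \<Rightarrow> nat \<Rightarrow> nat" where
  "matB m i j = (if ((i = 2 \<or> i = 3) \<and> j = m) \<or> (4 \<le> i \<and> i \<le> m \<and> j = 1) then 1 else 0)"

end

theory Submission
  imports Defs
begin

text \<open>Every \<open>A\<close>-coloured tree has height at most one: a root of colour \<open>3, \<dots>, m - 1\<close>
  carries only leaves of colour 2, and a root of colour \<open>m\<close> carries any word of leaves of
  colours 1 and 2, whence \<open>m - 3 + 2^(n-1)\<close> trees. For \<open>B\<close>, a root of colour \<open>4, \<dots>, m\<close>
  carries only leaves of colour 1, while a root of colour 2 or 3 carries a sequence of stars
  centred at colour \<open>m\<close>; the sizes of these stars form a composition of \<open>n - 1\<close>, whence
  \<open>m - 3 + 2 \<cdot> 2^(n-2)\<close> trees. Conjugating by a permutation matrix only permutes the colours,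
  hence the counts by root colour. But \<open>B\<close> has exactly 2 trees with 3 vertices and root
  colour 2, while for every root colour \<open>A\<close> has 0, 1 or 4 trees with 3 vertices.\<close>

abbreviation leaf :: "nat \<Rightarrow> ctree" where
  "leaf c \<equiv> CNode c []"

definition child_colors :: "nat \<Rightarrow> (nat \<Rightarrow> nat \<Rightarrow> nat) \<Rightarrow> nat \<Rightarrow> nat set" where
  "child_colors m M c = {j \<in> {1..m}. M c j = 1}"

lemma length_le_sum_list:
  fixes f :: "'a \<Rightarrow> nat"
  assumes "\<forall>x\<in>set xs. 0 < f x"
  shows "length xs \<le> sum_list (map f xs)"
  using assms by (induction xs) auto

lemma nverts_pos: "0 < nverts t"
  by (cases t) auto

lemma valid_col_root_col: "valid_col m M t \<Longrightarrow> root_col t \<in> {1..m}"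
  by (cases t) auto

lemma valid_col_child:
  assumes "valid_col m M (CNode c ts)" "t \<in> set ts"
  shows "root_col t \<in> child_colors m M c" "valid_col m M t"
  using assms valid_col_root_col[of m M t] by (auto simp: child_colors_def)

lemma valid_col_sink_is_leaf:
  assumes "valid_col m M t" "child_colors m M (root_col t) = {}"
  shows "t = leaf (root_col t)"
proof (cases t)
  case (CNode c ts)
  have "ts = []"
  proof (rule ccontr)
    assume "ts \<noteq> []"
    then have "hd ts \<in> set ts" by simp
    then have "root_col (hd ts) \<in> child_colors m M c"
      using valid_col_child(1) assms(1) CNode by blast
    then show False using assms(2) CNode by simp
  qed
  with CNode show ?thesis by simp
qed

lemma finite_valid_col_nverts_le: "finite {T. valid_col m M T \<and> nverts T \<le> n}"
proof (induction n)
  case 0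
  then show ?case by (simp add: nverts_pos[THEN gr_implies_not0])
next
  case (Suc n)
  let ?F = "{T. valid_col m M T \<and> nverts T \<le> n}"
  let ?C = "{1..m} \<times> {ts. set ts \<subseteq> ?F \<and> length ts \<le> n}"
  have "{T. valid_col m M T \<and> nverts T \<le> Suc n} \<subseteq> case_prod CNode ` ?C"
  proof
    fix T assume T: "T \<in> {T. valid_col m M T \<and> nverts T \<le> Suc n}"
    obtain c ts where T_eq: "T = CNode c ts" by (cases T)
    have size: "sum_list (map nverts ts) \<le> n" using T T_eq by simp
    have "nverts t \<le> n" if "t \<in> set ts" for t
      using member_le_sum_list[of "nverts t" "map nverts ts"] that size by simp
    then have "set ts \<subseteq> ?F"
      using T T_eq by auto
    moreover have "length ts \<le> n"
      using length_le_sum_list[of ts nverts] nverts_pos size by simp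
    ultimately have "(c, ts) \<in> ?C"
      using T T_eq by simp
    then show "T \<in> case_prod CNode ` ?C"
      using T_eq by (simp add: image_iff)
  qed
  moreover have "finite ?C"
    using finite_lists_length_le[OF Suc.IH] by simp
  ultimately show ?case by (rule finite_subset[OF _ finite_imageI])
qed

lemma nverts_leaves: "sum_list (map nverts (map leaf xs)) = length xs"
  by (induction xs) auto

lemma t_col_eq_sum_t_col_root: "t_col m M n = (\<Sum>c = 1..m. t_col_root m M c n)"
proof -
  let ?R = "\<lambda>c. {T. valid_col m M T \<and> nverts T = n \<and> root_col T = c}"
  have "{T. valid_col m M T \<and> nverts T = n} = (\<Union>c\<in>{1..m}. ?R c)"
    using valid_col_root_col by blast
  then have "t_col m M n = card (\<Union>c\<in>{1..m}. ?R c)"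
    unfolding t_col_def by simp
  also have "\<dots> = (\<Sum>c = 1..m. card (?R c))"
  proof (rule card_UN_disjoint)
    show "\<forall>c\<in>{1..m}. finite (?R c)"
      by (intro ballI finite_subset[OF _ finite_valid_col_nverts_le[of m M n]]) auto
  qed auto
  finally show ?thesis unfolding t_col_root_def .
qed

lemma nverts_eq_1_iff: "nverts T = 1 \<longleftrightarrow> T = leaf (root_col T)"
proof (cases T)
  case (CNode c ts)
  have "sum_list (map nverts ts) = 0 \<longleftrightarrow> ts = []"
    using nverts_pos[of "hd ts"] by (cases ts) auto
  with CNode show ?thesis by simp
qed

lemma t_col_one: "t_col m M 1 = m"
proof -
  have "{T. valid_col m M T \<and> nverts T = 1} = leaf ` {1..m}"
    using valid_col_root_col nverts_eq_1_iff by force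
  then show ?thesis unfolding t_col_def by (simp add: card_image inj_on_def)
qed

lemma t_col_root_sink_children:
  assumes c: "c \<in> {1..m}" and n: "1 \<le> n"
    and sinks: "\<forall>j\<in>child_colors m M c. child_colors m M j = {}"
  shows "t_col_root m M c n = card (child_colors m M c) ^ (n - 1)"
proof -
  let ?J = "child_colors m M c"
  let ?L = "{xs. set xs \<subseteq> ?J \<and> length xs = n - 1}"
  have "{T. valid_col m M T \<and> nverts T = n \<and> root_col T = c} = (\<lambda>xs. CNode c (map leaf xs)) ` ?L"
  proof (intro set_eqI iffI)
    fix T assume T: "T \<in> {T. valid_col m M T \<and> nverts T = n \<and> root_col T = c}"
    then obtain ts where T_eq: "T = CNode c ts" by (cases T) auto
    have "root_col t \<in> ?J" "t = leaf (root_col t)" if "t \<in> set ts" for t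
      using valid_col_child[of m M c ts t] valid_col_sink_is_leaf sinks T T_eq that by auto
    then have "ts = map leaf (map root_col ts)" "set (map root_col ts) \<subseteq> ?J"
      by (auto intro: map_idI[symmetric])
    moreover from this(1) have "length ts = n - 1"
      using T T_eq nverts_leaves[of "map root_col ts"] by auto
    ultimately show "T \<in> (\<lambda>xs. CNode c (map leaf xs)) ` ?L"
      using T_eq by (intro image_eqI[of _ _ "map root_col ts"]) auto
  next
    fix T assume "T \<in> (\<lambda>xs. CNode c (map leaf xs)) ` ?L"
    then obtain xs where "xs \<in> ?L" "T = CNode c (map leaf xs)" by blast
    then show "T \<in> {T. valid_col m M T \<and> nverts T = n \<and> root_col T = c}"
      using c n nverts_leaves[of xs] by (auto simp: child_colors_def)
  qed
  moreover have "inj_on (\<lambda>xs. CNode c (map leaf xs)) ?L"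
    by (auto simp: inj_on_def inj_map_eq_map inj_def)
  moreover have "finite ?J" by (simp add: child_colors_def)
  ultimately show ?thesis
    unfolding t_col_root_def by (simp add: card_image card_lists_length_eq)
qed

definition compositions :: "nat \<Rightarrow> nat list set" where
  "compositions N = {ps. (\<forall>p\<in>set ps. 0 < p) \<and> sum_list ps = N}"

lemma finite_compositions: "finite (compositions N)"
proof -
  have "compositions N \<subseteq> {ps. set ps \<subseteq> {0..N} \<and> length ps \<le> N}"
  proof
    fix ps assume "ps \<in> compositions N"
    then have "\<forall>p\<in>set ps. 0 < p" "sum_list ps = N" by (auto simp: compositions_def)
    moreover from this have "length ps \<le> N"
      using length_le_sum_list[of ps id] by simp
    ultimately show "ps \<in> {ps. set ps \<subseteq> {0..N} \<and> length ps \<le> N}"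
      using member_le_sum_list[of _ ps] by auto
  qed
  then show ?thesis
    using finite_lists_length_le[of "{0..N}" N] by (rule finite_subset) simp
qed

lemma compositions_1: "compositions 1 = {[1]}"
proof -
  have "ps = [1]" if "\<forall>p\<in>set ps. 0 < p" "sum_list ps = 1" for ps :: "nat list"
  proof (cases ps)
    case (Cons p r)
    then have "r = []" using that by (cases r) (auto simp: add_is_1)
    then show ?thesis using that Cons by auto
  qed (use that in simp)
  then show ?thesis by (auto simp: compositions_def)
qed

lemma compositions_Suc:
  assumes "1 \<le> N"
  shows "compositions (Suc N)
    = Cons 1 ` compositions N \<union> (\<lambda>ps. Suc (hd ps) # tl ps) ` compositions N"
proof (intro set_eqI iffI)
  fix ps assume ps: "ps \<in> compositions (Suc N)"
  then obtain p r where ps_eq: "ps = p # r" by (cases ps) (auto simp: compositions_def)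
  show "ps \<in> Cons 1 ` compositions N \<union> (\<lambda>ps. Suc (hd ps) # tl ps) ` compositions N"
  proof (cases "p = 1")
    case True
    then have "r \<in> compositions N" using ps ps_eq by (auto simp: compositions_def)
    then show ?thesis using True ps_eq by blast
  next
    case False
    then have "(p - 1) # r \<in> compositions N" "ps = Suc (p - 1) # r"
      using ps ps_eq by (auto simp: compositions_def)
    then show ?thesis by (intro UnI2 rev_image_eqI[of "(p - 1) # r"]) simp_all
  qed
next
  fix ps assume "ps \<in> Cons 1 ` compositions N \<union> (\<lambda>ps. Suc (hd ps) # tl ps) ` compositions N"
  then show "ps \<in> compositions (Suc N)"
  proof
    assume "ps \<in> (\<lambda>ps. Suc (hd ps) # tl ps) ` compositions N"
    then obtain qs where qs: "qs \<in> compositions N" "ps = Suc (hd qs) # tl qs" by blast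
    then have "qs \<noteq> []" using assms by (auto simp: compositions_def)
    then show ?thesis using qs by (cases qs) (auto simp: compositions_def)
  qed (auto simp: compositions_def)
qed

lemma card_compositions: "1 \<le> N \<Longrightarrow> card (compositions N) = 2 ^ (N - 1)"
proof (induction N rule: nat_induct_at_least)
  case base
  then show ?case using compositions_1 by simp
next
  case (Suc N)
  let ?C = "compositions N"
  let ?incr = "\<lambda>ps. Suc (hd ps) # tl ps"
  have nonempty: "ps \<noteq> []" if "ps \<in> ?C" for ps
    using that Suc.hyps by (auto simp: compositions_def)
  have hd_pos: "0 < hd ps" if "ps \<in> ?C" for ps
    using that hd_in_set[OF nonempty[OF that]] by (auto simp: compositions_def)
  have inj: "inj_on ?incr ?C"
  proof (rule inj_onI)
    fix ps qs assume "ps \<in> ?C" "qs \<in> ?C" "?incr ps = ?incr qs"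
    moreover from this(3) have "hd ps = hd qs" "tl ps = tl qs" by simp_all
    ultimately show "ps = qs" using nonempty by (metis hd_Cons_tl)
  qed
  have "1 # ps \<noteq> ?incr qs" if "qs \<in> ?C" for ps qs
    using hd_pos[OF that] by simp
  then have "Cons 1 ` ?C \<inter> ?incr ` ?C = {}" by blast
  then have "card (compositions (Suc N)) = card (Cons 1 ` ?C) + card (?incr ` ?C)"
    unfolding compositions_Suc[OF Suc.hyps]
    by (intro card_Un_disjoint) (simp_all add: finite_compositions)
  also have "\<dots> = 2 ^ (N - 1) + 2 ^ (N - 1)"
    using inj Suc.IH by (simp add: card_image)
  also have "\<dots> = 2 ^ (Suc N - 1)"
    using Suc.hyps by (cases N) simp_all
  finally show ?case .
qed

lemma t_col_root_eq_1E:
  assumes "\<forall>k\<ge>1. t_col_root m M d k = 1"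
  obtains u where "\<And>k. 0 < k \<Longrightarrow> valid_col m M (u k) \<and> nverts (u k) = k \<and> root_col (u k) = d"
    and "\<And>t. valid_col m M t \<Longrightarrow> root_col t = d \<Longrightarrow> t = u (nverts t)"
proof -
  let ?D = "\<lambda>k. {t. valid_col m M t \<and> nverts t = k \<and> root_col t = d}"
  have D_unique: "\<exists>!t. t \<in> ?D k" if k: "0 < k" for k
  proof -
    obtain t where "?D k = {t}"
      using assms k card_1_singleton_iff[of "?D k"] unfolding t_col_root_def by auto
    then show ?thesis by (simp add: Ex1_def)
  qed
  define u where "u k = (THE t. t \<in> ?D k)" for k
  show ?thesis
  proof
    show "valid_col m M (u k) \<and> nverts (u k) = k \<and> root_col (u k) = d" if "0 < k" for k
      using theI'[OF D_unique[OF that]] unfolding u_def by simp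
    show "t = u (nverts t)" if "valid_col m M t" "root_col t = d" for t
      using the1_equality[OF D_unique[OF nverts_pos[of t]]] that unfolding u_def by simp
  qed
qed

lemma t_col_root_single_child_color:
  assumes c: "c \<in> {1..m}" and n: "1 \<le> n" and d: "child_colors m M c = {d}"
    and unique: "\<forall>k\<ge>1. t_col_root m M d k = 1"
  shows "t_col_root m M c n = card (compositions (n - 1))"
proof -
  let ?S = "{T. valid_col m M T \<and> nverts T = n \<and> root_col T = c}"
  obtain u where u: "\<And>k. 0 < k \<Longrightarrow> valid_col m M (u k) \<and> nverts (u k) = k \<and> root_col (u k) = d"
    and u_unique: "\<And>t. valid_col m M t \<Longrightarrow> root_col t = d \<Longrightarrow> t = u (nverts t)"
    using t_col_root_eq_1E[OF unique] by blast
  have size_u: "map (nverts \<circ> u) ps = ps" if "\<forall>p\<in>set ps. 0 < p" for ps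
    using that u by (induction ps) auto
  have "bij_betw (\<lambda>ps. CNode c (map u ps)) (compositions (n - 1)) ?S"
  proof (rule bij_betw_imageI)
    show "inj_on (\<lambda>ps. CNode c (map u ps)) (compositions (n - 1))"
      by (rule inj_on_inverseI[where g = "\<lambda>T. case T of CNode _ ts \<Rightarrow> map nverts ts"])
        (auto simp: size_u compositions_def)
    show "(\<lambda>ps. CNode c (map u ps)) ` compositions (n - 1) = ?S"
    proof (intro set_eqI iffI)
      fix T assume "T \<in> (\<lambda>ps. CNode c (map u ps)) ` compositions (n - 1)"
      then obtain ps where ps: "ps \<in> compositions (n - 1)" "T = CNode c (map u ps)" by blast
      then have pos: "\<forall>p\<in>set ps. 0 < p" and sum: "sum_list ps = n - 1"
        by (auto simp: compositions_def)
      moreover have "M c d = 1" using d by (auto simp: child_colors_def)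
      ultimately have "\<forall>t\<in>set (map u ps). M c (root_col t) = 1 \<and> valid_col m M t"
        using u by auto
      moreover have "nverts T = n"
        using ps(2) n size_u[OF pos] sum by simp
      ultimately show "T \<in> ?S"
        using ps(2) c by simp
    next
      fix T assume T: "T \<in> ?S"
      then obtain ts where T_eq: "T = CNode c ts" by (cases T) auto
      have "valid_col m M t \<and> root_col t = d" if "t \<in> set ts" for t
        using valid_col_child[of m M c ts t] T T_eq d that by auto
      then have "map (\<lambda>t. u (nverts t)) ts = ts"
        using u_unique by (simp add: map_idI)
      then have "ts = map u (map nverts ts)"
        by (simp add: o_def)
      moreover have "map nverts ts \<in> compositions (n - 1)"
        using T T_eq nverts_pos by (auto simp: compositions_def)
      ultimately show "T \<in> (\<lambda>ps. CNode c (map u ps)) ` compositions (n - 1)"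
        using T_eq by blast
    qed
  qed
  then show ?thesis
    unfolding t_col_root_def by (simp add: bij_betw_same_card)
qed

lemma child_colors_matA:
  assumes "4 \<le> m" "c \<in> {1..m}"
  shows "child_colors m (matA m) c = (if c = m then {1, 2} else if 3 \<le> c then {2} else {})"
  using assms by (auto simp: child_colors_def matA_def)

lemma child_colors_matB:
  assumes "4 \<le> m" "c \<in> {1..m}"
  shows "child_colors m (matB m) c = (if c = 1 then {} else if c \<le> 3 then {m} else {1})"
  using assms by (auto simp: child_colors_def matB_def)

lemma t_col_root_matA:
  assumes m: "4 \<le> m" and c: "c \<in> {1..m}" and n: "2 \<le> n"
  shows "t_col_root m (matA m) c n = (if c = m then 2 ^ (n - 1) else if 3 \<le> c then 1 else 0)"
proof -
  have "child_colors m (matA m) j = {}" if "j \<in> child_colors m (matA m) c" for j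
  proof -
    have "j \<in> {1, 2}" using that child_colors_matA[OF m c] by (auto split: if_splits)
    then show ?thesis using child_colors_matA[OF m, of j] m by auto
  qed
  then show ?thesis
    using t_col_root_sink_children[of c m n "matA m"] child_colors_matA[OF m c] c n
    by (simp add: numeral_2_eq_2)
qed

lemma t_col_root_matB:
  assumes m: "4 \<le> m" and c: "c \<in> {1..m}" and n: "2 \<le> n"
  shows "t_col_root m (matB m) c n = (if c = 1 then 0 else if c \<le> 3 then 2 ^ (n - 2) else 1)"
proof -
  have sink: "child_colors m (matB m) 1 = {}"
    using child_colors_matB[OF m, of 1] m by simp
  have star: "t_col_root m (matB m) c' k = 1" if "c' \<in> {4..m}" "1 \<le> k" for c' k
    using t_col_root_sink_children[of c' m k "matB m"] child_colors_matB[OF m, of c'] sink that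
    by simp
  consider "c = 1" | "c = 2 \<or> c = 3" | "4 \<le> c" using c by force
  then show ?thesis
  proof cases
    case 1
    then show ?thesis
      using t_col_root_sink_children[of c m n "matB m"] child_colors_matB[OF m c] c n by simp
  next
    case 2
    then have "t_col_root m (matB m) c n = card (compositions (n - 1))"
      using t_col_root_single_child_color[of c m n "matB m" m] child_colors_matB[OF m c] star[of m] c n m
      by auto
    also have "\<dots> = 2 ^ (n - 2)"
      using card_compositions[of "n - 1"] n by simp
    finally show ?thesis using 2 by auto
  next
    case 3
    then show ?thesis using star c n by simp
  qed
qed

lemma t_col_matA:
  assumes m: "4 \<le> m" and n: "2 \<le> n"
  shows "t_col m (matA m) n = 2 ^ (n - 1) + m - 3"
proof -
  have "t_col m (matA m) n
      = (\<Sum>c = 1..m. (if c \<in> {m} then 2 ^ (n - 1) else 0) + (if c \<in> {3..<m} then 1 else 0))"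
    unfolding t_col_eq_sum_t_col_root using t_col_root_matA[OF m _ n] by (intro sum.cong) auto
  also have "\<dots> = (\<Sum>c\<in>{1..m} \<inter> {m}. 2 ^ (n - 1)) + (\<Sum>c\<in>{1..m} \<inter> {3..<m}. 1)"
    by (simp only: sum.distrib sum.inter_restrict[OF finite_atLeastAtMost])
  also have "\<dots> = 2 ^ (n - 1) + (m - 3)"
  proof -
    have "{1..m} \<inter> {m} = {m}" "{1..m} \<inter> {3..<m} = {3..<m}"
      using m by auto
    then show ?thesis by simp
  qed
  finally show ?thesis using m by simp
qed

lemma t_col_matB:
  assumes m: "4 \<le> m" and n: "2 \<le> n"
  shows "t_col m (matB m) n = 2 ^ (n - 1) + m - 3"
proof -
  have "t_col m (matB m) n
      = (\<Sum>c = 1..m. (if c \<in> {2, 3} then 2 ^ (n - 2) else 0) + (if c \<in> {4..m} then 1 else 0))"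
    unfolding t_col_eq_sum_t_col_root using t_col_root_matB[OF m _ n] by (intro sum.cong) auto
  also have "\<dots> = (\<Sum>c\<in>{1..m} \<inter> {2, 3}. 2 ^ (n - 2)) + (\<Sum>c\<in>{1..m} \<inter> {4..m}. 1)"
    by (simp only: sum.distrib sum.inter_restrict[OF finite_atLeastAtMost])
  also have "\<dots> = 2 * 2 ^ (n - 2) + (m - 3)"
  proof -
    have "{1..m} \<inter> {2, 3} = {2, 3}" "{1..m} \<inter> {4..m} = {4..m}"
      using m by auto
    then show ?thesis by simp
  qed
  also have "2 * 2 ^ (n - 2) = (2::nat) ^ (n - 1)"
  proof -
    have "n - 1 = Suc (n - 2)" using n by simp
    then show ?thesis by simp
  qed
  finally show ?thesis using m by simp
qed

fun relabel :: "(nat \<Rightarrow> nat) \<Rightarrow> ctree \<Rightarrow> ctree" where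
  "relabel f (CNode c ts) = CNode (f c) (map (relabel f) ts)"

lemma root_col_relabel [simp]: "root_col (relabel f T) = f (root_col T)"
  by (cases T) simp

lemma nverts_relabel [simp]: "nverts (relabel f T) = nverts T"
  by (induction T) (simp add: o_def cong: map_cong)

lemma relabel_relabel [simp]: "relabel f (relabel g T) = relabel (f \<circ> g) T"
  by (induction T) simp

lemma relabel_id [simp]: "relabel id T = T"
  by (induction T) (simp add: map_idI)

lemma valid_col_relabel:
  assumes "s permutes {1..m}"
  shows "valid_col m A (relabel s T) \<longleftrightarrow> valid_col m (\<lambda>i j. A (s i) (s j)) T"
proof (induction T)
  case (CNode c ts)
  have "s c \<in> {1..m} \<longleftrightarrow> c \<in> {1..m}"
    using permutes_in_image[OF assms] .
  with CNode show ?case by auto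
qed

lemma t_col_root_permuted:
  assumes s: "s permutes {1..m}"
  shows "t_col_root m (\<lambda>i j. A (s i) (s j)) c n = t_col_root m A (s c) n"
proof -
  have "bij_betw (relabel s)
      {T. valid_col m (\<lambda>i j. A (s i) (s j)) T \<and> nverts T = n \<and> root_col T = c}
      {T. valid_col m A T \<and> nverts T = n \<and> root_col T = s c}"
    using permutes_inv_o[OF s] permutes_inverses(2)[OF s]
    by (intro bij_betw_byWitness[where f' = "relabel (inv s)"])
      (auto simp: valid_col_relabel[OF s, symmetric])
  then show ?thesis
    unfolding t_col_root_def by (rule bij_betw_same_card)
qed

lemma not_strongly_tc_equiv_by_root_count:
  assumes i: "i \<in> {1..m}" and n: "1 \<le> n"
    and counts: "\<forall>c\<in>{1..m}. t_col_root m A c n \<noteq> t_col_root m B i n"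
  shows "\<not> strongly_tc_equiv m A B"
proof
  assume "strongly_tc_equiv m A B"
  then obtain s where s: "s permutes {1..m}"
    and equiv: "strictly_tc_equiv m (\<lambda>i j. A (s i) (s j)) B"
    unfolding strongly_tc_equiv_def by blast
  have "t_col_root m A (s i) n = t_col_root m B i n"
    using equiv i n t_col_root_permuted[OF s] unfolding strictly_tc_equiv_def by metis
  moreover have "s i \<in> {1..m}"
    using permutes_in_image[OF s] i by simp
  ultimately show False
    using counts by blast
qed

theorem theorem37:
  fixes m :: nat
  assumes "m \<ge> 4"
  shows "(\<forall>n\<ge>2. t_col m (matA m) n = 2 ^ (n - 1) + m - 3 \<and>
                  t_col m (matB m) n = 2 ^ (n - 1) + m - 3)
       \<and> t_col m (matA m) 1 = m \<and> t_col m (matB m) 1 = m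
       \<and> \<not> strongly_tc_equiv m (matA m) (matB m)"
proof (intro conjI allI impI)
  fix n :: nat assume "n \<ge> 2"
  then show "t_col m (matA m) n = 2 ^ (n - 1) + m - 3" "t_col m (matB m) n = 2 ^ (n - 1) + m - 3"
    using t_col_matA t_col_matB assms by simp_all
next
  show "t_col m (matA m) 1 = m" "t_col m (matB m) 1 = m"
    by (rule t_col_one)+
next
  have "t_col_root m (matB m) 2 3 = 2"
    using t_col_root_matB[OF assms, of 2 3] assms by simp
  moreover have "t_col_root m (matA m) c 3 \<noteq> 2" if "c \<in> {1..m}" for c
    using t_col_root_matA[OF assms that, of 3] by simp
  ultimately show "\<not> strongly_tc_equiv m (matA m) (matB m)"
    using assms by (intro not_strongly_tc_equiv_by_root_count[of 2 m 3]) auto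
qed

end
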